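(* Let $X$ be a real reflexive Banach space, and let $\mathcal{H}$, $\mathcal{A}$, $\mathcal{H}_{\ast\le}$, $\mathcal{H}_{\ast\ge}$ be as in the context. Then: (i) $\mathcal{A}$ maps $\mathcal{H}$ into $\mathcal{H}_{\ast\le}$, and the map $h\mapsto(\mathcal{A}h)^{\ast}\circ i$ maps $\mathcal{H}$ into $\mathcal{H}_{\ast\ge}$. (ii) The set of fixed points of $\mathcal{A}$ is $\{h\in\mathcal{H}_{\ast\le}: h^{\ast}\circ i=h \text{ on } \mathrm{dom}(h)\}$. (iii) For every $h\in\mathcal{H}$ and every $n\ge1$, $\mathrm{dom}(\mathcal{A}^n h)=\mathrm{dom}(h)\cap\mathrm{dom}(h^{\ast}\circ i)$. (iv) For every $h\in\mathcal{H}$, the sequences $\{\mathcal{A}^n h\}_{n\ge1}\subset\mathcal{H}_{\ast\le}$ and $\{(\mathcal{A}^n h)^{\ast}\circ i\}_{n\ge1}\subset\mathcal{H}_{\ast\ge}$ are pointwise non-increasing and non-decreasing, respectively. Their pointwise limit $\mathcal{A}^{\infty}h:=\lim_{n}\mathcal{A}^n h$ satisfies $\mathrm{dom}(\mathcal{A}^{\infty}h)=\mathrm{dom}(h)\cap\mathrm{dom}(h^{\ast}\circ i)$, and if $\mathcal{A}^{\infty}h$ is lower semicontinuous then it is a fixed point of $\mathcal{A}$. (v) For every $h\in\mathcal{H}$ and every $n\ge1$, $(\mathcal{A}^n h)^{\ast}\circ i\le\mathcal{A}^{\infty}h\le\mathcal{A}^n h$. (vi) For every $h\in\mathcal{H}$,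 the sequence $\{(\mathcal{A}^n h)^{\ast}\circ i\}_{n\ge1}$ converges pointwise to $\mathcal{A}^{\infty}h$ on $\mathrm{dom}(h)\cap\mathrm{dom}(h^{\ast}\circ i)$. (vii) If $T:X\rightrightarrows X^{\ast}$ is maximally monotone, $h\in\mathcal{H}(T)$, and $\mathcal{A}^{\infty}h$ is lower semicontinuous, then $\mathcal{A}^{\infty}h\in\mathcal{H}(T)$.
   Context: $X^{\ast}$ is the dual of $X$ with pairing $\langle\cdot,\cdot\rangle$. The dual of $X\times X^{\ast}$ is identified with $X^{\ast}\times X$ via $\langle (x,x^{\ast}),(y^{\ast},y)\rangle=\langle x,y^{\ast}\rangle+\langle y,x^{\ast}\rangle$; for $g:X\times X^{\ast}\to\mathbb{R}\cup\{+\infty\}$, its conjugate is $g^{\ast}(y^{\ast},y)=\sup_{(x,x^{\ast})}\{\langle x,y^{\ast}\rangle+\langle y,x^{\ast}\rangle-g(x,x^{\ast})\}$. Let $i:X\times X^{\ast}\to X^{\ast}\times X$, $i(x,x^{\ast})=(x^{\ast},x)$, so $g^{\ast}\circ i$ is a function on $X\times X^{\ast}$. For a maximally monotone $T:X\rightrightarrows X^{\ast}$, $\mathcal{H}(T)$ is the family of lower semicontinuous convex functions $h:X\times X^{\ast}\to\mathbb{R}\cup\{+\infty\}$ with $h(x,x^{\ast})\ge\langle x,x^{\ast}\rangle$ everywhere and $h(x,x^{\ast})=\langle x,x^{\ast}\rangle$ whenever $x^{\ast}\in T(x)$. $\mathcal{H}:=\bigcup\{\mathcal{H}(T): T \text{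 maximally monotone}\}$. The map $\mathcal{A}:\mathcal{H}\to\mathcal{H}$ is $\mathcal{A}h:=\tfrac12(h+h^{\ast}\circ i)$ (it is known that $\mathcal{A}h\in\mathcal{H}(T)$ whenever $h\in\mathcal{H}(T)$), and $\mathcal{A}^n$ denotes its $n$-th iterate. $\mathcal{H}_{\ast\le}:=\{h\in\mathcal{H}: h^{\ast}\circ i\le h\}$ and $\mathcal{H}_{\ast\ge}:=\{h\in\mathcal{H}: h^{\ast}\circ i\ge h\}$. $\mathrm{dom}(g)=\{z: g(z)<+\infty\}$. *)

theory Defs
  imports "HOL-Analysis.Analysis"
begin

text \<open>The dual space of X is \<open>'a \<Rightarrow>\<^sub>L real\<close> (bounded linear functionals with the operator norm);
  the pairing is \<open>\<langle>x, x'\<rangle> = blinfun_apply x' x\<close>.  Functions into \<open>\<real> \<union> {+\<infinity>}\<close> are modelled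
  as ereal-valued functions.\<close>

definition canon_emb :: "'a::real_normed_vector \<Rightarrow> (('a \<Rightarrow>\<^sub>L real) \<Rightarrow>\<^sub>L real)" where
  "canon_emb x = Blinfun (\<lambda>f. blinfun_apply f x)"

definition reflexive_space :: "'a::real_normed_vector itself \<Rightarrow> bool" where
  "reflexive_space _ \<longleftrightarrow> surj (canon_emb :: 'a \<Rightarrow> _)"

definition pairing :: "'a::real_normed_vector \<times> ('a \<Rightarrow>\<^sub>L real) \<Rightarrow> real" where
  "pairing z = blinfun_apply (snd z) (fst z)"

text \<open>Conjugate of g on the dual of \<open>X \<times> X*\<close>, identified with \<open>X* \<times> X\<close>.\<close>
definition conj :: "('a::real_normed_vector \<times> ('a \<Rightarrow>\<^sub>L real) \<Rightarrow> ereal)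
    \<Rightarrow> ('a \<Rightarrow>\<^sub>L real) \<times> 'a \<Rightarrow> ereal" where
  "conj g w = (SUP z. ereal (blinfun_apply (fst w) (fst z) + blinfun_apply (snd z) (snd w)) - g z)"

definition iswap :: "'a \<times> 'b \<Rightarrow> 'b \<times> 'a" where
  "iswap z = (snd z, fst z)"

definition conj_i :: "('a::real_normed_vector \<times> ('a \<Rightarrow>\<^sub>L real) \<Rightarrow> ereal)
    \<Rightarrow> 'a \<times> ('a \<Rightarrow>\<^sub>L real) \<Rightarrow> ereal" where
  "conj_i g = conj g \<circ> iswap"

definition edom :: "('b \<Rightarrow> ereal) \<Rightarrow> 'b set" where
  "edom g = {z. g z < \<infinity>}"

definition lsc :: "('b::topological_space \<Rightarrow> ereal) \<Rightarrow> bool" where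
  "lsc g \<longleftrightarrow> (\<forall>c::real. closed {z. g z \<le> ereal c})"

definition econvex :: "('b::real_vector \<Rightarrow> ereal) \<Rightarrow> bool" where
  "econvex g \<longleftrightarrow> convex {(z, r::real). g z \<le> ereal r}"

definition monotone_op :: "('a::real_normed_vector \<times> ('a \<Rightarrow>\<^sub>L real)) set \<Rightarrow> bool" where
  "monotone_op G \<longleftrightarrow> (\<forall>(x, x')\<in>G. \<forall>(y, y')\<in>G. blinfun_apply (x' - y') (x - y) \<ge> 0)"

definition max_monotone :: "('a::real_normed_vector \<times> ('a \<Rightarrow>\<^sub>L real)) set \<Rightarrow> bool" where
  "max_monotone G \<longleftrightarrow> monotone_op G \<and> (\<forall>G'. monotone_op G' \<and> G \<subseteq> G' \<longrightarrow> G' = G)"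

definition HT :: "('a::real_normed_vector \<times> ('a \<Rightarrow>\<^sub>L real)) set
    \<Rightarrow> ('a \<times> ('a \<Rightarrow>\<^sub>L real) \<Rightarrow> ereal) set" where
  "HT G = {h. lsc h \<and> econvex h \<and> (\<forall>z. h z \<ge> ereal (pairing z))
              \<and> (\<forall>z\<in>G. h z = ereal (pairing z))}"

definition Hall :: "('a::real_normed_vector \<times> ('a \<Rightarrow>\<^sub>L real) \<Rightarrow> ereal) set" where
  "Hall = \<Union>{HT G | G. max_monotone G}"

definition Aop :: "('a::real_normed_vector \<times> ('a \<Rightarrow>\<^sub>L real) \<Rightarrow> ereal)
    \<Rightarrow> 'a \<times> ('a \<Rightarrow>\<^sub>L real) \<Rightarrow> ereal" where
  "Aop h = (\<lambda>z. (h z + conj_i h z) / 2)"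

definition H_le :: "('a::real_normed_vector \<times> ('a \<Rightarrow>\<^sub>L real) \<Rightarrow> ereal) set" where
  "H_le = {h\<in>Hall. conj_i h \<le> h}"

definition H_ge :: "('a::real_normed_vector \<times> ('a \<Rightarrow>\<^sub>L real) \<Rightarrow> ereal) set" where
  "H_ge = {h\<in>Hall. conj_i h \<ge> h}"

definition Ainf :: "('a::real_normed_vector \<times> ('a \<Rightarrow>\<^sub>L real) \<Rightarrow> ereal)
    \<Rightarrow> 'a \<times> ('a \<Rightarrow>\<^sub>L real) \<Rightarrow> ereal" where
  "Ainf h = (\<lambda>z. lim (\<lambda>n. (Aop ^^ n) h z))"

end

theory Submission
  imports Defs
begin

text \<open>For a representative function h of a maximally monotone T, the function \<open>h\<^sup>* \<circ> i\<close> is again a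
  representative of T (by maximality, and a Fitzpatrick-type inequality on the graph), and the
  Fenchel--Young inequality gives \<open>(\<A>h)\<^sup>* \<circ> i \<le> \<A>h\<close>. Hence, from \<open>n = 1\<close> on, the iterates
  \<open>\<A>\<^sup>nh\<close> decrease and their conjugates \<open>(\<A>\<^sup>nh)\<^sup>* \<circ> i\<close> increase, each conjugate lying below every
  iterate. Since \<open>\<A>\<^sup>n\<^sup>+\<^sup>1h\<close> is the midpoint of \<open>\<A>\<^sup>nh\<close> and its conjugate, where the limit is finite
  the conjugates converge to the same limit, which makes \<open>\<A>\<^sup>\<infinity>h\<close> self-conjugate on its domain.\<close>

definition cross_pairing :: "'a::real_normed_vector \<times> ('a \<Rightarrow>\<^sub>L real) \<Rightarrow> 'a \<times> ('a \<Rightarrow>\<^sub>L real) \<Rightarrow> real"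
  where "cross_pairing z w = blinfun_apply (snd z) (fst w) + blinfun_apply (snd w) (fst z)"

lemma cross_pairing_commute: "cross_pairing z w = cross_pairing w z"
  by (simp add: cross_pairing_def)

lemma cross_pairing_self: "cross_pairing z z = 2 * pairing z"
  by (simp add: cross_pairing_def pairing_def)

lemma cross_pairing_linear_left:
  "cross_pairing (u *\<^sub>R z1 + v *\<^sub>R z2) w = u * cross_pairing z1 w + v * cross_pairing z2 w"
  by (simp add: cross_pairing_def blinfun.add_left blinfun.scaleR_left blinfun.add_right
      blinfun.scaleR_right algebra_simps)

lemma pairing_diff: "pairing (z - w) = pairing z - cross_pairing z w + pairing w"
  by (simp add: pairing_def cross_pairing_def blinfun.diff_left blinfun.diff_right)

lemma pairing_segment:
  "pairing ((1 - t) *\<^sub>R z + t *\<^sub>R w)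
     = (1 - t) * (1 - t) * pairing z + t * (1 - t) * cross_pairing z w + t * t * pairing w"
  by (simp add: pairing_def cross_pairing_def blinfun.add_left blinfun.scaleR_left
      blinfun.add_right blinfun.scaleR_right) (simp add: algebra_simps)

section \<open>The conjugate \<open>g\<^sup>* \<circ> i\<close>\<close>

lemma conj_i_eq_SUP: "conj_i g z = (SUP w. ereal (cross_pairing z w) - g w)"
  by (simp add: conj_i_def conj_def iswap_def cross_pairing_def add.commute)

lemma fenchel_young_conj_i: "ereal (cross_pairing z w) - g w \<le> conj_i g z"
  unfolding conj_i_eq_SUP by (rule SUP_upper) simp

lemma conj_i_leI: "(\<And>w. ereal (cross_pairing z w) - g w \<le> c) \<Longrightarrow> conj_i g z \<le> c"
  unfolding conj_i_eq_SUP by (rule SUP_least)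

lemma conj_i_antimono: "(\<And>w. f w \<le> g w) \<Longrightarrow> conj_i g z \<le> conj_i f z"
  by (rule conj_i_leI, rule order_trans[OF _ fenchel_young_conj_i], rule ereal_minus_mono) auto

lemma conj_i_conj_i_le: "conj_i (conj_i f) z \<le> f z"
proof (rule conj_i_leI)
  fix w
  have "ereal (cross_pairing z w) - f z \<le> conj_i f w"
    using fenchel_young_conj_i[of w z f] by (simp add: cross_pairing_commute)
  then show "ereal (cross_pairing z w) - conj_i f w \<le> f z"
    by (cases "f z"; cases "conj_i f w") auto
qed

lemma lsc_conj_i: "lsc (conj_i g)"
  unfolding lsc_def
proof
  fix c :: real
  have "closed {z. ereal (cross_pairing z w) - g w \<le> ereal c}" for w
  proof (cases "g w")
    case (real s)
    have "closed {z. cross_pairing z w - s \<le> c}"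
      unfolding cross_pairing_def by (intro closed_Collect_le continuous_intros)
    then show ?thesis using real by simp
  qed auto
  moreover have "{z. conj_i g z \<le> ereal c} = (\<Inter>w. {z. ereal (cross_pairing z w) - g w \<le> ereal c})"
    by (auto simp: conj_i_eq_SUP SUP_le_iff)
  ultimately show "closed {z. conj_i g z \<le> ereal c}" by auto
qed

lemma econvexI:
  assumes "\<And>z1 z2 r1 r2 u v. g z1 \<le> ereal r1 \<Longrightarrow> g z2 \<le> ereal r2 \<Longrightarrow> 0 \<le> u \<Longrightarrow> 0 \<le> v
    \<Longrightarrow> u + v = 1 \<Longrightarrow> g (u *\<^sub>R z1 + v *\<^sub>R z2) \<le> ereal (u * r1 + v * r2)"
  shows "econvex g"
  unfolding econvex_def convex_def using assms by auto

lemma econvexD: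
  assumes "econvex g" "g z1 \<le> ereal r1" "g z2 \<le> ereal r2" "0 \<le> u" "0 \<le> v" "u + v = 1"
  shows "g (u *\<^sub>R z1 + v *\<^sub>R z2) \<le> ereal (u * r1 + v * r2)"
  using assms unfolding econvex_def convex_def by (auto dest!: bspec[of _ _ "(z1, r1)"])

lemma econvex_conj_i: "econvex (conj_i g)"
proof (rule econvexI)
  fix z1 r1 z2 r2 and u v :: real
  assume le1: "conj_i g z1 \<le> ereal r1" and le2: "conj_i g z2 \<le> ereal r2"
    and uv: "0 \<le> u" "0 \<le> v" "u + v = 1"
  show "conj_i g (u *\<^sub>R z1 + v *\<^sub>R z2) \<le> ereal (u * r1 + v * r2)"
  proof (rule conj_i_leI)
    fix w
    have 1: "ereal (cross_pairing z1 w) - g w \<le> ereal r1"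
      using le1 fenchel_young_conj_i order_trans by blast
    have 2: "ereal (cross_pairing z2 w) - g w \<le> ereal r2"
      using le2 fenchel_young_conj_i order_trans by blast
    show "ereal (cross_pairing (u *\<^sub>R z1 + v *\<^sub>R z2) w) - g w \<le> ereal (u * r1 + v * r2)"
    proof (cases "g w")
      case (real s)
      have "u * (cross_pairing z1 w - s) + v * (cross_pairing z2 w - s) \<le> u * r1 + v * r2"
        using 1 2 real uv by (intro add_mono mult_left_mono) auto
      moreover have "u * (cross_pairing z1 w - s) + v * (cross_pairing z2 w - s)
          = cross_pairing (u *\<^sub>R z1 + v *\<^sub>R z2) w - s"
        using uv(3) by (simp add: cross_pairing_linear_left algebra_simps flip: distrib_left)
      ultimately show ?thesis using real by simp
    qed (use 1 in auto)
  qed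
qed

section \<open>Midpoints in the extended reals\<close>

lemma ereal_half_sum_le_realE:
  fixes x y :: ereal
  assumes "x \<noteq> -\<infinity>" "y \<noteq> -\<infinity>" "(x + y) / 2 \<le> ereal r"
  obtains a b where "x = ereal a" "y = ereal b" "a + b \<le> 2 * r"
proof -
  obtain a b where "x = ereal a" "y = ereal b"
    using assms by (cases x; cases y) auto
  with assms(3) that show thesis by auto
qed

lemma ereal_half_sum_le_real:
  "x \<le> ereal a \<Longrightarrow> y \<le> ereal b \<Longrightarrow> a + b \<le> 2 * r \<Longrightarrow> (x + y) / 2 \<le> ereal r"
  by (cases x; cases y) auto

lemma ereal_less_half_sumE:
  fixes x y :: ereal
  assumes "x \<noteq> -\<infinity>" "y \<noteq> -\<infinity>" "ereal r < (x + y) / 2"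
  obtains a b where "ereal a < x" "ereal b < y" "2 * r \<le> a + b"
proof (cases x; cases y)
  fix p q assume "x = ereal p" "y = ereal q"
  \<comment> \<open>split the slack \<open>p + q - 2r > 0\<close> evenly\<close>
  with assms that[of "p - (p + q - 2 * r) / 2" "q - (p + q - 2 * r) / 2"] show thesis by auto
next
  fix p assume "x = ereal p" "y = \<infinity>"
  with that[of "p - 1" "2 * r - (p - 1)"] show thesis by auto
next
  fix q assume "x = \<infinity>" "y = ereal q"
  with that[of "2 * r - (q - 1)" "q - 1"] show thesis by auto
next
  assume "x = \<infinity>" "y = \<infinity>"
  with that[of r r] show thesis by auto
qed (use assms in auto)

lemma ereal_less_half_sum:
  "ereal a < x \<Longrightarrow> ereal b < y \<Longrightarrow> 2 * r \<le> a + b \<Longrightarrow> ereal r < (x + y) / 2"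
  by (cases x; cases y) auto

lemma ereal_le_half_sum: "(c :: ereal) \<le> x \<Longrightarrow> c \<le> y \<Longrightarrow> c \<le> (x + y) / 2"
  by (cases c; cases x; cases y) auto

lemma ereal_half_sum_le_left: "y \<le> x \<Longrightarrow> (x + y) / 2 \<le> (x :: ereal)"
  by (cases x; cases y) auto

lemma ereal_half_sum_less_infinity_iff:
  "(x :: ereal) \<noteq> -\<infinity> \<Longrightarrow> y \<noteq> -\<infinity> \<Longrightarrow> (x + y) / 2 < \<infinity> \<longleftrightarrow> x < \<infinity> \<and> y < \<infinity>"
  by (cases x; cases y) auto

lemma ereal_half_sum_eq_left_iff:
  "(x :: ereal) \<noteq> -\<infinity> \<Longrightarrow> y \<noteq> -\<infinity> \<Longrightarrow> (x + y) / 2 = x \<longleftrightarrow> x = \<infinity> \<or> y = x"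
  by (cases x; cases y) auto

lemma ereal_diff_half_sum_le:
  fixes a b c d :: ereal
  assumes "ereal e - a \<le> c" "ereal e - b \<le> d" "a \<noteq> -\<infinity>" "b \<noteq> -\<infinity>" "c \<noteq> -\<infinity>" "d \<noteq> -\<infinity>"
  shows "ereal e - (a + b) / 2 \<le> (c + d) / 2"
  using assms by (cases a; cases b; cases c; cases d) (auto simp: field_simps)

lemma lsc_open_superlevel: "lsc g \<Longrightarrow> open {z. ereal a < g z}"
  unfolding lsc_def by (metis (no_types, lifting) Collect_cong closed_def not_le Compl_eq mem_Collect_eq)

lemma lsc_half_sum:
  assumes "lsc f" "lsc g" "\<And>z. f z \<noteq> -\<infinity>" "\<And>z. g z \<noteq> -\<infinity>"
  shows "lsc (\<lambda>z. (f z + g z) / 2)"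
  unfolding lsc_def closed_def
proof (intro allI, subst open_subopen, intro ballI)
  fix r :: real and z
  assume "z \<in> - {z. (f z + g z) / 2 \<le> ereal r}"
  then obtain a b where ab: "ereal a < f z" "ereal b < g z" "2 * r \<le> a + b"
    using ereal_less_half_sumE[OF assms(3,4)] by (metis ComplD mem_Collect_eq not_le)
  let ?T = "{z. ereal a < f z} \<inter> {z. ereal b < g z}"
  have "open ?T" using lsc_open_superlevel assms(1,2) by blast
  moreover have "?T \<subseteq> - {z. (f z + g z) / 2 \<le> ereal r}"
  proof
    fix y assume "y \<in> ?T"
    then have "ereal r < (f y + g y) / 2" using ereal_less_half_sum[OF _ _ ab(3)] by blast
    then show "y \<in> - {z. (f z + g z) / 2 \<le> ereal r}" by auto
  qed
  ultimately show "\<exists>T. open T \<and> z \<in> T \<and> T \<subseteq> - {z. (f z + g z) / 2 \<le> ereal r}"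
    using ab by blast
qed

lemma econvex_half_sum:
  assumes "econvex f" "econvex g" "\<And>z. f z \<noteq> -\<infinity>" "\<And>z. g z \<noteq> -\<infinity>"
  shows "econvex (\<lambda>z. (f z + g z) / 2)"
proof (rule econvexI)
  fix z1 z2 r1 r2 and u v :: real
  assume le1: "(f z1 + g z1) / 2 \<le> ereal r1" and le2: "(f z2 + g z2) / 2 \<le> ereal r2"
    and uv: "0 \<le> u" "0 \<le> v" "u + v = 1"
  obtain a1 b1 where 1: "f z1 = ereal a1" "g z1 = ereal b1" "a1 + b1 \<le> 2 * r1"
    using ereal_half_sum_le_realE[OF assms(3,4) le1] .
  obtain a2 b2 where 2: "f z2 = ereal a2" "g z2 = ereal b2" "a2 + b2 \<le> 2 * r2"
    using ereal_half_sum_le_realE[OF assms(3,4) le2] .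
  have f: "f (u *\<^sub>R z1 + v *\<^sub>R z2) \<le> ereal (u * a1 + v * a2)"
    by (rule econvexD[OF assms(1)]) (use 1 2 uv in auto)
  have g: "g (u *\<^sub>R z1 + v *\<^sub>R z2) \<le> ereal (u * b1 + v * b2)"
    by (rule econvexD[OF assms(2)]) (use 1 2 uv in auto)
  have "u * (a1 + b1) + v * (a2 + b2) \<le> u * (2 * r1) + v * (2 * r2)"
    using 1 2 uv by (intro add_mono mult_left_mono) auto
  then show "(f (u *\<^sub>R z1 + v *\<^sub>R z2) + g (u *\<^sub>R z1 + v *\<^sub>R z2)) / 2 \<le> ereal (u * r1 + v * r2)"
    by (intro ereal_half_sum_le_real[OF f g]) (simp add: algebra_simps)
qed

lemma econvex_INF_decseq:
  assumes cvx: "\<And>n. econvex (f n)" and dec: "\<And>z. decseq (\<lambda>n. f n z)"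
  shows "econvex (\<lambda>z. INF n. f n z)"
proof (rule econvexI)
  fix z1 z2 r1 r2 and u v :: real
  assume le1: "(INF n. f n z1) \<le> ereal r1" and le2: "(INF n. f n z2) \<le> ereal r2"
    and uv: "0 \<le> u" "0 \<le> v" "u + v = 1"
  show "(INF n. f n (u *\<^sub>R z1 + v *\<^sub>R z2)) \<le> ereal (u * r1 + v * r2)"
  proof (rule ereal_le_epsilon2)
    fix e :: real assume "0 < e"
    then have "ereal r1 < ereal (r1 + e)" "ereal r2 < ereal (r2 + e)" by auto
    then have "(INF n. f n z1) < ereal (r1 + e)" "(INF n. f n z2) < ereal (r2 + e)"
      using le1 le2 by order+
    then obtain n1 n2 where n1: "f n1 z1 < ereal (r1 + e)" and n2: "f n2 z2 < ereal (r2 + e)"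
      unfolding INF_less_iff by blast
    define N where "N = max n1 n2"
    have "f N z1 \<le> f n1 z1" "f N z2 \<le> f n2 z2"
      using decseqD[OF dec] by (simp_all add: N_def)
    with n1 n2 have "f N z1 \<le> ereal (r1 + e)" "f N z2 \<le> ereal (r2 + e)" by simp_all
    then have "f N (u *\<^sub>R z1 + v *\<^sub>R z2) \<le> ereal (u * (r1 + e) + v * (r2 + e))"
      using econvexD[OF cvx] uv by blast
    also have "u * (r1 + e) + v * (r2 + e) = (u * r1 + v * r2) + e"
      using uv(3) by (simp add: algebra_simps flip: distrib_left)
    finally have "f N (u *\<^sub>R z1 + v *\<^sub>R z2) \<le> ereal (u * r1 + v * r2) + ereal e" by simp
    then show "(INF n. f n (u *\<^sub>R z1 + v *\<^sub>R z2)) \<le> ereal (u * r1 + v * r2) + ereal e"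
      by (rule INF_lower2[OF UNIV_I])
  qed
qed

section \<open>Representative functions of a maximally monotone operator\<close>

lemma monotone_op_iff_pairing: "monotone_op G \<longleftrightarrow> (\<forall>z\<in>G. \<forall>w\<in>G. 0 \<le> pairing (z - w))"
  unfolding monotone_op_def pairing_def by (simp add: case_prod_beta)

lemma max_monotone_memI:
  assumes G: "max_monotone G" and related: "\<And>w. w \<in> G \<Longrightarrow> 0 \<le> pairing (z - w)"
  shows "z \<in> G"
proof -
  have mono: "monotone_op G" using G by (simp add: max_monotone_def)
  have swap: "pairing (y - x) = pairing (x - y)" for x y
    by (simp add: pairing_diff cross_pairing_commute)
  have "0 \<le> pairing (x - y)" if xy: "x \<in> insert z G" "y \<in> insert z G" for x y
  proof -
    consider "x = z" "y = z" | "x = z" "y \<in> G" | "x \<in> G" "y = z" | "x \<in> G" "y \<in> G"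
      using xy by blast
    then show ?thesis
    proof cases
      case 1 then show ?thesis by (simp add: pairing_def)
    next
      case 2 then show ?thesis by (simp add: related)
    next
      case 3 then show ?thesis using related[of x] swap[of x z] by simp
    next
      case 4 then show ?thesis using mono by (simp add: monotone_op_iff_pairing)
    qed
  qed
  then have "monotone_op (insert z G)" by (simp add: monotone_op_iff_pairing)
  then show ?thesis using G by (auto simp: max_monotone_def)
qed

lemma HT_ge_pairing: "h \<in> HT G \<Longrightarrow> ereal (pairing z) \<le> h z"
  by (cases z) (simp add: HT_def)

lemma HT_eq_pairing: "h \<in> HT G \<Longrightarrow> z \<in> G \<Longrightarrow> h z = ereal (pairing z)"
  by (simp add: HT_def)

lemma HT_econvex: "h \<in> HT G \<Longrightarrow> econvex h"
  by (simp add: HT_def)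

lemma HT_not_MInfty: "h \<in> HT G \<Longrightarrow> h z \<noteq> -\<infinity>"
  using HT_ge_pairing[of h G z] by auto

lemma le_of_segment_le:
  fixes A B s :: real
  assumes "\<And>t. 0 < t \<Longrightarrow> t \<le> 1 \<Longrightarrow> (1 - t) * A + t * B \<le> s"
  shows "A \<le> s"
proof -
  have "((\<lambda>t. (1 - t) * A + t * B) \<longlongrightarrow> (1 - 0) * A + 0 * B) (at_right 0)"
    by (intro tendsto_intros)
  moreover have "eventually (\<lambda>t. (1 - t) * A + t * B \<le> s) (at_right 0)"
    using eventually_at_right_real[OF zero_less_one] by eventually_elim (use assms in auto)
  ultimately show ?thesis
    using tendsto_upperbound[OF _ _ trivial_limit_at_right_real] by simp
qed

text \<open>Convexity of h along the segment from a point of the graph to w, where h dominates the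
  quadratic function \<open>pairing\<close> with equality at the graph point.\<close>
lemma HT_ge_cross_pairing:
  assumes h: "h \<in> HT G" and z: "z \<in> G"
  shows "ereal (cross_pairing z w - pairing z) \<le> h w"
proof (cases "h w")
  case (real s)
  have "(1 - t) * (cross_pairing z w - pairing z) + t * pairing w \<le> s" if t: "0 < t" "t \<le> 1" for t
  proof -
    have "ereal (pairing ((1 - t) *\<^sub>R z + t *\<^sub>R w)) \<le> h ((1 - t) *\<^sub>R z + t *\<^sub>R w)"
      by (rule HT_ge_pairing[OF h])
    also have "\<dots> \<le> ereal ((1 - t) * pairing z + t * s)"
      by (rule econvexD[OF HT_econvex[OF h]]) (use HT_eq_pairing[OF h z] real t in auto)
    finally have "pairing ((1 - t) *\<^sub>R z + t *\<^sub>R w) \<le> (1 - t) * pairing z + t * s"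
      by (simp only: ereal_less_eq)
    then have "t * ((1 - t) * (cross_pairing z w - pairing z) + t * pairing w) \<le> t * s"
      unfolding pairing_segment by (simp add: algebra_simps)
    then show ?thesis using t by simp
  qed
  then have "cross_pairing z w - pairing z \<le> s" by (rule le_of_segment_le)
  then show ?thesis using real by simp
qed (use HT_not_MInfty[OF h] in auto)

lemma conj_i_ge_pairing:
  assumes G: "max_monotone G" and h: "h \<in> HT G"
  shows "ereal (pairing z) \<le> conj_i h z"
proof (rule ccontr)
  assume "\<not> ereal (pairing z) \<le> conj_i h z"
  then have gap: "0 < pairing (z - w)" if "w \<in> G" for w
  proof -
    have "ereal (cross_pairing z w - pairing w) \<le> conj_i h z"
      using fenchel_young_conj_i[of z w h] HT_eq_pairing[OF h that] by simp
    also have "\<dots> < ereal (pairing z)"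
      using \<open>\<not> ereal (pairing z) \<le> conj_i h z\<close> by simp
    finally show ?thesis by (simp add: pairing_diff)
  qed
  then have "z \<in> G"
    using max_monotone_memI[OF G] less_imp_le by blast
  then show False using gap[of z] by (simp add: pairing_def)
qed

lemma conj_i_eq_pairing:
  assumes h: "h \<in> HT G" and z: "z \<in> G"
  shows "conj_i h z = ereal (pairing z)"
proof (rule antisym)
  show "conj_i h z \<le> ereal (pairing z)"
  proof (rule conj_i_leI)
    fix w show "ereal (cross_pairing z w) - h w \<le> ereal (pairing z)"
      using HT_ge_cross_pairing[OF h z, of w] by (cases "h w") auto
  qed
  show "ereal (pairing z) \<le> conj_i h z"
    using fenchel_young_conj_i[of z z h] HT_eq_pairing[OF h z] by (simp add: cross_pairing_self)
qed

lemma conj_i_HT: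
  assumes "max_monotone G" "h \<in> HT G"
  shows "conj_i h \<in> HT G"
  unfolding HT_def
  using lsc_conj_i econvex_conj_i conj_i_ge_pairing[OF assms] conj_i_eq_pairing[OF assms(2)] by blast

lemma Aop_HT:
  assumes G: "max_monotone G" and h: "h \<in> HT G"
  shows "Aop h \<in> HT G"
proof -
  have c: "conj_i h \<in> HT G" by (rule conj_i_HT[OF G h])
  have "lsc (Aop h)"
    unfolding Aop_def using h c by (intro lsc_half_sum HT_not_MInfty) (auto simp: HT_def)
  moreover have "econvex (Aop h)"
    unfolding Aop_def using h c by (intro econvex_half_sum HT_not_MInfty) (auto simp: HT_def)
  moreover have "ereal (pairing z) \<le> Aop h z" for z
    unfolding Aop_def by (rule ereal_le_half_sum[OF HT_ge_pairing[OF h] HT_ge_pairing[OF c]])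
  moreover have "Aop h z = ereal (pairing z)" if "z \<in> G" for z
    unfolding Aop_def using HT_eq_pairing[OF h that] HT_eq_pairing[OF c that] by simp
  ultimately show ?thesis unfolding HT_def by blast
qed

lemma conj_i_Aop_le:
  assumes G: "max_monotone G" and h: "h \<in> HT G"
  shows "conj_i (Aop h) z \<le> Aop h z"
proof (rule conj_i_leI)
  fix w
  have c: "conj_i h \<in> HT G" by (rule conj_i_HT[OF G h])
  have "ereal (cross_pairing z w) - conj_i h w \<le> h z"
    using fenchel_young_conj_i[of z w "conj_i h"] conj_i_conj_i_le[of h z] by order
  then show "ereal (cross_pairing z w) - Aop h w \<le> Aop h z"
    using ereal_diff_half_sum_le[OF fenchel_young_conj_i _ HT_not_MInfty[OF h] HT_not_MInfty[OF c]
        HT_not_MInfty[OF c] HT_not_MInfty[OF h]]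
    by (simp add: Aop_def add.commute)
qed

lemma Aop_eq_self_iff:
  assumes "max_monotone G" "h \<in> HT G"
  shows "Aop h = h \<longleftrightarrow> (\<forall>z\<in>edom h. conj_i h z = h z)"
  using ereal_half_sum_eq_left_iff[OF HT_not_MInfty[OF assms(2)] HT_not_MInfty[OF conj_i_HT[OF assms]]]
  by (auto simp: Aop_def edom_def fun_eq_iff)

lemma Hall_iff: "h \<in> Hall \<longleftrightarrow> (\<exists>G. max_monotone G \<and> h \<in> HT G)"
  by (auto simp: Hall_def)

lemma fixed_points_Aop:
  "{h \<in> Hall. Aop h = h} = {h \<in> H_le. \<forall>z\<in>edom h. conj_i h z = h z}"
proof -
  have "conj_i h \<le> h" if "\<forall>z\<in>edom h. conj_i h z = h z" for h :: "'a \<times> ('a \<Rightarrow>\<^sub>L real) \<Rightarrow> ereal"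
  proof (rule le_funI)
    fix z show "conj_i h z \<le> h z"
      using that[rule_format, of z] by (cases "h z = \<infinity>") (auto simp: edom_def)
  qed
  then show ?thesis
    by (auto simp: H_le_def Hall_iff Aop_eq_self_iff)
qed

section \<open>Iterating \<open>\<A>\<close>\<close>

locale representative_function =
  fixes G :: "('a::real_normed_vector \<times> ('a \<Rightarrow>\<^sub>L real)) set" and h
  assumes max_monotone: "max_monotone G" and representative: "h \<in> HT G"
begin

lemma Aop_iter_HT: "(Aop ^^ n) h \<in> HT G"
  by (induction n) (auto intro: Aop_HT[OF max_monotone] representative)

lemma conj_i_Aop_iter_HT: "conj_i ((Aop ^^ n) h) \<in> HT G"
  by (rule conj_i_HT[OF max_monotone Aop_iter_HT])

lemma Aop_iter_Suc: "(Aop ^^ Suc n) h z = ((Aop ^^ n) h z + conj_i ((Aop ^^ n) h) z) / 2"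
  by (simp add: Aop_def)

lemma conj_i_Aop_iter_le: "1 \<le> n \<Longrightarrow> conj_i ((Aop ^^ n) h) z \<le> (Aop ^^ n) h z"
  using conj_i_Aop_le[OF max_monotone Aop_iter_HT] by (cases n) auto

lemma Aop_iter_Suc_le: "1 \<le> n \<Longrightarrow> (Aop ^^ Suc n) h z \<le> (Aop ^^ n) h z"
  unfolding Aop_iter_Suc by (rule ereal_half_sum_le_left[OF conj_i_Aop_iter_le])

lemma conj_i_Aop_iter_le_Suc: "1 \<le> n \<Longrightarrow> conj_i ((Aop ^^ n) h) z \<le> conj_i ((Aop ^^ Suc n) h) z"
  by (rule conj_i_antimono[OF Aop_iter_Suc_le])

lemma Aop_iter_antimono:
  assumes "1 \<le> n" "n \<le> m"
  shows "(Aop ^^ m) h z \<le> (Aop ^^ n) h z"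
  using assms(2)
proof (induction m rule: dec_induct)
  case (step k)
  have "(Aop ^^ Suc k) h z \<le> (Aop ^^ k) h z"
    by (rule Aop_iter_Suc_le) (use assms(1) step(1) in simp)
  then show ?case using step(3) by order
qed simp

lemma conj_i_Aop_iter_mono:
  assumes "1 \<le> n" "n \<le> m"
  shows "conj_i ((Aop ^^ n) h) z \<le> conj_i ((Aop ^^ m) h) z"
  by (rule conj_i_antimono[OF Aop_iter_antimono[OF assms]])

lemma conj_i_Aop_iter_le_Aop_iter:
  assumes "1 \<le> n" "1 \<le> m"
  shows "conj_i ((Aop ^^ n) h) z \<le> (Aop ^^ m) h z"
proof (cases "n \<le> m")
  case True
  then show ?thesis
    using conj_i_Aop_iter_mono[OF assms(1) True, of z] conj_i_Aop_iter_le[OF assms(2), of z] by order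
next
  case False
  then have "m \<le> n" by simp
  then show ?thesis
    using conj_i_Aop_iter_le[OF assms(1), of z] Aop_iter_antimono[OF assms(2) \<open>m \<le> n\<close>, of z] by order
qed

lemma decseq_Aop_iter: "decseq (\<lambda>n. (Aop ^^ Suc n) h z)"
  by (rule decseq_SucI) (rule Aop_iter_Suc_le, simp)

lemma Ainf_eq_INF: "Ainf h z = (INF n. (Aop ^^ Suc n) h z)"
  and Aop_iter_LIMSEQ: "(\<lambda>n. (Aop ^^ n) h z) \<longlonglongrightarrow> Ainf h z"
proof -
  have "(\<lambda>n. (Aop ^^ n) h z) \<longlonglongrightarrow> (INF n. (Aop ^^ Suc n) h z)"
    using LIMSEQ_INF[OF decseq_Aop_iter] by (rule LIMSEQ_imp_Suc)
  moreover from this show "Ainf h z = (INF n. (Aop ^^ Suc n) h z)"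
    unfolding Ainf_def by (rule limI)
  ultimately show "(\<lambda>n. (Aop ^^ n) h z) \<longlonglongrightarrow> Ainf h z" by simp
qed

lemma Ainf_le_Aop_iter: "1 \<le> n \<Longrightarrow> Ainf h z \<le> (Aop ^^ n) h z"
  unfolding Ainf_eq_INF by (cases n) (auto intro: INF_lower2)

lemma conj_i_Aop_iter_le_Ainf: "1 \<le> n \<Longrightarrow> conj_i ((Aop ^^ n) h) z \<le> Ainf h z"
  unfolding Ainf_eq_INF by (rule INF_greatest) (rule conj_i_Aop_iter_le_Aop_iter, auto)

lemma Aop_iter_less_infinity_iff:
  assumes "1 \<le> n"
  shows "(Aop ^^ n) h z < \<infinity> \<longleftrightarrow> h z < \<infinity> \<and> conj_i h z < \<infinity>"
  using assms
proof (induction n rule: dec_induct)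
  case base
  show ?case
    using ereal_half_sum_less_infinity_iff[OF HT_not_MInfty[OF representative]
        HT_not_MInfty[OF conj_i_HT[OF max_monotone representative]]]
    by (simp add: Aop_def)
next
  case (step n)
  have "(Aop ^^ Suc n) h z < \<infinity> \<longleftrightarrow> (Aop ^^ n) h z < \<infinity> \<and> conj_i ((Aop ^^ n) h) z < \<infinity>"
    unfolding Aop_iter_Suc
    by (rule ereal_half_sum_less_infinity_iff[OF HT_not_MInfty[OF Aop_iter_HT] HT_not_MInfty[OF conj_i_Aop_iter_HT]])
  also have "\<dots> \<longleftrightarrow> (Aop ^^ n) h z < \<infinity>"
    using conj_i_Aop_iter_le[OF step(1), of z] by auto
  finally show ?case using step by simp
qed

lemma edom_Aop_iter: "1 \<le> n \<Longrightarrow> edom ((Aop ^^ n) h) = edom h \<inter> edom (conj_i h)"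
  using Aop_iter_less_infinity_iff by (auto simp: edom_def)

lemma edom_Ainf: "edom (Ainf h) = edom h \<inter> edom (conj_i h)"
proof -
  have "Ainf h z < \<infinity> \<longleftrightarrow> (\<exists>n. (Aop ^^ Suc n) h z < \<infinity>)" for z
    unfolding Ainf_eq_INF INF_less_iff by (simp del: funpow.simps)
  moreover have "(Aop ^^ Suc n) h z < \<infinity> \<longleftrightarrow> h z < \<infinity> \<and> conj_i h z < \<infinity>" for n z
    by (rule Aop_iter_less_infinity_iff) simp
  ultimately show ?thesis by (auto simp: edom_def)
qed

text \<open>On the domain everything is finite and \<open>\<A>\<^sup>n\<^sup>+\<^sup>1h = (\<A>\<^sup>nh + (\<A>\<^sup>nh)\<^sup>* \<circ> i) / 2\<close>, so the conjugates
  are \<open>2 \<A>\<^sup>n\<^sup>+\<^sup>1h - \<A>\<^sup>nh\<close>, which tend to \<open>2 \<A>\<^sup>\<infinity>h - \<A>\<^sup>\<infinity>h\<close>.\<close>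
lemma conj_i_Aop_iter_LIMSEQ:
  assumes "z \<in> edom h \<inter> edom (conj_i h)"
  shows "(\<lambda>n. conj_i ((Aop ^^ n) h) z) \<longlonglongrightarrow> Ainf h z"
proof -
  have finite: "(Aop ^^ n) h z < \<infinity> \<and> conj_i ((Aop ^^ n) h) z < \<infinity>" for n
  proof -
    have "(Aop ^^ Suc n) h z < \<infinity>"
      by (subst Aop_iter_less_infinity_iff) (use assms in \<open>auto simp: edom_def\<close>)
    then show ?thesis
      unfolding Aop_iter_Suc
      using ereal_half_sum_less_infinity_iff[OF HT_not_MInfty[OF Aop_iter_HT]
          HT_not_MInfty[OF conj_i_Aop_iter_HT]] by blast
  qed
  define a where "a n = real_of_ereal ((Aop ^^ n) h z)" for n
  define b where "b n = real_of_ereal (conj_i ((Aop ^^ n) h) z)" for n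
  define L where "L = real_of_ereal (Ainf h z)"
  have a: "(Aop ^^ n) h z = ereal (a n)" for n
    using finite[of n] HT_not_MInfty[OF Aop_iter_HT, of n z]
    unfolding a_def by (cases "(Aop ^^ n) h z") auto
  have b: "conj_i ((Aop ^^ n) h) z = ereal (b n)" for n
    using finite[of n] HT_not_MInfty[OF conj_i_Aop_iter_HT, of n z]
    unfolding b_def by (cases "conj_i ((Aop ^^ n) h) z") auto
  have L: "Ainf h z = ereal L"
    using Ainf_le_Aop_iter[of 1 z] conj_i_Aop_iter_le_Ainf[of 1 z] a[of 1] b[of 1]
    unfolding L_def by (cases "Ainf h z") auto
  have "a \<longlonglongrightarrow> L"
    using Aop_iter_LIMSEQ[of z] by (simp add: a L)
  then have "(\<lambda>n. 2 * a (Suc n) - a n) \<longlonglongrightarrow> 2 * L - L"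
    by (intro tendsto_intros LIMSEQ_Suc)
  moreover have "b n = 2 * a (Suc n) - a n" for n
    using Aop_iter_Suc[of n z] by (simp add: a b del: funpow.simps)
  ultimately show ?thesis by (simp add: b L)
qed

lemma Aop_iter_H_le: "1 \<le> n \<Longrightarrow> (Aop ^^ n) h \<in> H_le"
  unfolding H_le_def Hall_iff le_fun_def
  using Aop_iter_HT max_monotone conj_i_Aop_iter_le by blast

lemma conj_i_Aop_iter_H_ge:
  assumes "1 \<le> n"
  shows "conj_i ((Aop ^^ n) h) \<in> H_ge"
proof -
  have "conj_i ((Aop ^^ n) h) z \<le> conj_i (conj_i ((Aop ^^ n) h)) z" for z
    by (rule conj_i_antimono) (rule conj_i_Aop_iter_le[OF assms])
  then show ?thesis
    unfolding H_ge_def Hall_iff le_fun_def using conj_i_Aop_iter_HT max_monotone by blast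
qed

lemma Ainf_HT:
  assumes "lsc (Ainf h)"
  shows "Ainf h \<in> HT G"
proof -
  have "econvex (\<lambda>z. INF n. (Aop ^^ Suc n) h z)"
    by (rule econvex_INF_decseq[OF HT_econvex[OF Aop_iter_HT] decseq_Aop_iter])
  moreover have "Ainf h = (\<lambda>z. INF n. (Aop ^^ Suc n) h z)"
    using Ainf_eq_INF by blast
  moreover have "ereal (pairing z) \<le> Ainf h z" for z
    using HT_ge_pairing[OF conj_i_Aop_iter_HT] conj_i_Aop_iter_le_Ainf[of 1 z] order_trans by blast
  moreover have "Ainf h z = ereal (pairing z)" if "z \<in> G" for z
    unfolding Ainf_eq_INF using HT_eq_pairing[OF Aop_iter_HT that] by (simp del: funpow.simps)
  ultimately show ?thesis
    using assms by (simp add: HT_def)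
qed

lemma conj_i_Ainf_eq:
  assumes "z \<in> edom (Ainf h)"
  shows "conj_i (Ainf h) z = Ainf h z"
proof (rule antisym)
  have "conj_i (Ainf h) z \<le> conj_i (conj_i ((Aop ^^ Suc n) h)) z" for n
    by (rule conj_i_antimono) (rule conj_i_Aop_iter_le_Ainf, simp)
  then show "conj_i (Ainf h) z \<le> Ainf h z"
    unfolding Ainf_eq_INF by (meson INF_greatest conj_i_conj_i_le order_trans)
  have "conj_i ((Aop ^^ n) h) z \<le> conj_i (Ainf h) z" if "1 \<le> n" for n
    by (rule conj_i_antimono) (rule Ainf_le_Aop_iter[OF that])
  then show "Ainf h z \<le> conj_i (Ainf h) z"
    using assms edom_Ainf by (intro LIMSEQ_le_const2[OF conj_i_Aop_iter_LIMSEQ]) auto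
qed

lemma Ainf_Hall: "lsc (Ainf h) \<Longrightarrow> Ainf h \<in> Hall"
  unfolding Hall_iff using Ainf_HT max_monotone by blast

lemma Aop_Ainf: "lsc (Ainf h) \<Longrightarrow> Aop (Ainf h) = Ainf h"
  by (simp add: Aop_eq_self_iff[OF max_monotone Ainf_HT] conj_i_Ainf_eq)

end

lemma HallE:
  assumes "h \<in> Hall"
  obtains G where "representative_function G h"
  using assms unfolding Hall_iff representative_function_def by blast

theorem theorem2p3:
  fixes X :: "'a::banach itself"
  assumes refl: "reflexive_space X"
  shows
    \<comment> \<open>(i)\<close>
    "(\<forall>h\<in>(Hall :: ('a \<times> ('a \<Rightarrow>\<^sub>L real) \<Rightarrow> ereal) set).
        Aop h \<in> H_le \<and> conj_i (Aop h) \<in> H_ge)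
    \<comment> \<open>(ii)\<close>
   \<and> {h\<in>(Hall :: ('a \<times> ('a \<Rightarrow>\<^sub>L real) \<Rightarrow> ereal) set). Aop h = h}
       = {h\<in>H_le. \<forall>z\<in>edom h. conj_i h z = h z}
    \<comment> \<open>(iii)\<close>
   \<and> (\<forall>h\<in>(Hall :: ('a \<times> ('a \<Rightarrow>\<^sub>L real) \<Rightarrow> ereal) set). \<forall>n\<ge>1.
        edom ((Aop ^^ n) h) = edom h \<inter> edom (conj_i h))
    \<comment> \<open>(iv)\<close>
   \<and> (\<forall>h\<in>(Hall :: ('a \<times> ('a \<Rightarrow>\<^sub>L real) \<Rightarrow> ereal) set).
        (\<forall>n\<ge>1. (Aop ^^ n) h \<in> H_le \<and> conj_i ((Aop ^^ n) h) \<in> H_ge)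
      \<and> (\<forall>n\<ge>1. \<forall>z. (Aop ^^ Suc n) h z \<le> (Aop ^^ n) h z
                   \<and> conj_i ((Aop ^^ n) h) z \<le> conj_i ((Aop ^^ Suc n) h) z)
      \<and> (\<forall>z. (\<lambda>n. (Aop ^^ n) h z) \<longlonglongrightarrow> Ainf h z)
      \<and> edom (Ainf h) = edom h \<inter> edom (conj_i h)
      \<and> (lsc (Ainf h) \<longrightarrow> Ainf h \<in> Hall \<and> Aop (Ainf h) = Ainf h))
    \<comment> \<open>(v)\<close>
   \<and> (\<forall>h\<in>(Hall :: ('a \<times> ('a \<Rightarrow>\<^sub>L real) \<Rightarrow> ereal) set). \<forall>n\<ge>1. \<forall>z.
        conj_i ((Aop ^^ n) h) z \<le> Ainf h z \<and> Ainf h z \<le> (Aop ^^ n) h z)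
    \<comment> \<open>(vi)\<close>
   \<and> (\<forall>h\<in>(Hall :: ('a \<times> ('a \<Rightarrow>\<^sub>L real) \<Rightarrow> ereal) set). \<forall>z\<in>edom h \<inter> edom (conj_i h).
        (\<lambda>n. conj_i ((Aop ^^ n) h) z) \<longlonglongrightarrow> Ainf h z)
    \<comment> \<open>(vii)\<close>
   \<and> (\<forall>(G :: ('a \<times> ('a \<Rightarrow>\<^sub>L real)) set) h. max_monotone G \<longrightarrow> h \<in> HT G \<longrightarrow>
        lsc (Ainf h) \<longrightarrow> Ainf h \<in> HT G)"
  by (intro conjI fixed_points_Aop ballI allI impI; (elim HallE)?;
      (simp add: representative_function.edom_Aop_iter representative_function.edom_Ainf; fail)?;
      blast intro: representative_function.intro
        representative_function.Aop_iter_H_le representative_function.Aop_iter_H_le[of _ _ 1, simplified]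
        representative_function.conj_i_Aop_iter_H_ge
        representative_function.conj_i_Aop_iter_H_ge[of _ _ 1, simplified]
        representative_function.Aop_iter_Suc_le representative_function.conj_i_Aop_iter_le_Suc
        representative_function.Aop_iter_LIMSEQ representative_function.conj_i_Aop_iter_LIMSEQ
        representative_function.conj_i_Aop_iter_le_Ainf representative_function.Ainf_le_Aop_iter
        representative_function.Ainf_HT representative_function.Ainf_Hall
        representative_function.Aop_Ainf)

end
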